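(* Let $F$ and $G$ be BISO channels with output alphabet $\{-1,0,1\}$ (i.e. $l=1$) such that $\eta_{KL}(F)=\eta_{KL}(G)$. Then $F\succeq_{\mathrm{l.n.}}G$ or $G\succeq_{\mathrm{l.n.}}F$.
   Context: A binary-input symmetric-output (BISO) channel is a channel $P_{Y|X}$ with input alphabet $\{0,1\}$ and finite output alphabet $\mathcal Y=\{0,\pm1,\dots,\pm l\}$ for some integer $l\ge 1$ (some transition probabilities may be zero), such that $P_{Y|X}(y|0)=P_{Y|X}(-y|1)=:p_y$ for all $y\in\mathcal Y$. The KL contraction coefficient is $\eta_{KL}(P)=\sup_{P_X,Q_X}\frac{D(P\circ P_X\|P\circ Q_X)}{D(P_X\|Q_X)}$ (supremum over input distributions with $0<D(P_X\|Q_X)<\infty$, $P\circ P_X$ the output distribution). For channels $P_{Y|X},Q_{Y'|X}$ with the same input alphabet, $P\succeq_{\mathrm{l.n.}}Q$ (less noisy) means: for every finite-alphabet random variable $U$ and every joint distribution $P_{UX}$, with $U-X-Y$ and $U-X-Y'$ Markov chains, $I(U:Y)\ge I(U:Y')$. *)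

theory Defs
  imports Complex_Main "HOL-Library.Extended_Real"
begin

definition pmf_on :: "'a set \<Rightarrow> ('a \<Rightarrow> real) \<Rightarrow> bool" where
  "pmf_on A p \<longleftrightarrow> (\<forall>a\<in>A. 0 \<le> p a) \<and> (\<Sum>a\<in>A. p a) = 1"

definition channel :: "'a set \<Rightarrow> 'b set \<Rightarrow> ('a \<Rightarrow> 'b \<Rightarrow> real) \<Rightarrow> bool" where
  "channel X Y W \<longleftrightarrow> (\<forall>x\<in>X. pmf_on Y (W x))"

definition out_dist :: "'a set \<Rightarrow> ('a \<Rightarrow> 'b \<Rightarrow> real) \<Rightarrow> ('a \<Rightarrow> real) \<Rightarrow> 'b \<Rightarrow> real" where
  "out_dist X W p = (\<lambda>y. \<Sum>x\<in>X. p x * W x y)"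

definition KL :: "'a set \<Rightarrow> ('a \<Rightarrow> real) \<Rightarrow> ('a \<Rightarrow> real) \<Rightarrow> ereal" where
  "KL A p q = (if \<exists>a\<in>A. 0 < p a \<and> q a = 0 then \<infinity>
               else ereal (\<Sum>a\<in>{a\<in>A. 0 < p a}. p a * ln (p a / q a)))"

definition eta_KL :: "'a set \<Rightarrow> 'b set \<Rightarrow> ('a \<Rightarrow> 'b \<Rightarrow> real) \<Rightarrow> ereal" where
  "eta_KL X Y W = (SUP pq \<in> {(p, q). pmf_on X p \<and> pmf_on X q \<and> 0 < KL X p q \<and> KL X p q < \<infinity>}.
       KL Y (out_dist X W (fst pq)) (out_dist X W (snd pq)) / KL X (fst pq) (snd pq))"

text \<open>Mutual information I(U;Y) where P_{UX} is the joint law on U \<times> X and Y is the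
  output of channel W fed with X (so U - X - Y is a Markov chain).\<close>
definition mutual_info :: "'u set \<Rightarrow> 'a set \<Rightarrow> 'b set \<Rightarrow> ('a \<Rightarrow> 'b \<Rightarrow> real)
    \<Rightarrow> ('u \<Rightarrow> 'a \<Rightarrow> real) \<Rightarrow> real" where
  "mutual_info U X Y W PUX =
    (let PUY = (\<lambda>u y. \<Sum>x\<in>X. PUX u x * W x y);
         PU = (\<lambda>u. \<Sum>x\<in>X. PUX u x);
         PY = (\<lambda>y. \<Sum>u\<in>U. PUY u y)
     in \<Sum>(u, y)\<in>{(u, y) \<in> U \<times> Y. 0 < PUY u y}. PUY u y * ln (PUY u y / (PU u * PY y)))"

text \<open>Finite alphabets for U are represented (up to bijection)
  as finite subsets of nat.\<close>
definition less_noisy :: "'a set \<Rightarrow> 'b set \<Rightarrow> ('a \<Rightarrow> 'b \<Rightarrow> real)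
    \<Rightarrow> 'c set \<Rightarrow> ('a \<Rightarrow> 'c \<Rightarrow> real) \<Rightarrow> bool" where
  "less_noisy X Y W Y' W' \<longleftrightarrow>
    (\<forall>(U :: nat set) (PUX :: nat \<Rightarrow> 'a \<Rightarrow> real).
       finite U \<and> pmf_on (U \<times> X) (\<lambda>(u, x). PUX u x) \<longrightarrow>
       mutual_info U X Y' W' PUX \<le> mutual_info U X Y W PUX)"

definition biso1 :: "(nat \<Rightarrow> int \<Rightarrow> real) \<Rightarrow> bool" where
  "biso1 W \<longleftrightarrow> channel {0, 1} {-1, 0, 1} W \<and> (\<forall>y\<in>{-1, 0, 1}. W 0 y = W 1 (- y))"

end

theory Submission
  imports Defs "HOL-Real_Asymp.Real_Asymp"
begin

text \<open>Write a = W 0 (-1), b = W 0 1 and e = W 0 0. A ternary BISO channel erases its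
  input with probability e and otherwise acts as a binary symmetric channel of bias
  \<theta> = (a - b) / (a + b). Hence every divergence between its outputs is (1 - e) times a
  binary divergence D(\<theta> x || \<theta> y) in bias coordinates, and the strong data processing
  inequality of binary symmetric channels, D(\<lambda> z || \<lambda> w) \<le> \<lambda>^2 D(z || w) for
  |\<lambda>| \<le> 1, shows \<eta>_KL = (1 - e) \<theta>^2.
  If F and G have the same \<eta>_KL and |\<theta>_G| \<le> |\<theta>_F|, write \<theta>_G = \<lambda> \<theta>_F. Then each
  term (1 - e_G) D(\<lambda> \<theta>_F x || \<lambda> \<theta>_F y) of I(U;Y_G) is at most
  (1 - e_G) \<lambda>^2 D(\<theta>_F x || \<theta>_F y), the corresponding term of I(U;Y_F), because
  (1 - e_G) \<lambda>^2 = 1 - e_F.\<close>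

subsection \<open>Binary divergence in bias coordinates\<close>

definition kl_summand :: "real \<Rightarrow> real \<Rightarrow> real" where
  "kl_summand r q = r * ln (r / q)"

definition binary_KL :: "real \<Rightarrow> real \<Rightarrow> real" where
  "binary_KL z w = kl_summand ((1 + z) / 2) ((1 + w) / 2) + kl_summand ((1 - z) / 2) ((1 - w) / 2)"

lemma kl_summand_same [simp]: "kl_summand r r = 0"
  by (cases "r = 0") (simp_all add: kl_summand_def)

lemma kl_summand_0_left [simp]: "kl_summand 0 q = 0"
  by (simp add: kl_summand_def)

lemma kl_summand_scale: "k \<noteq> 0 \<Longrightarrow> kl_summand (k * r) (k * q) = k * kl_summand r q"
  by (simp add: kl_summand_def)

lemma kl_summand_halves:
  "0 < x \<Longrightarrow> 0 < y \<Longrightarrow> kl_summand (x / 2) (y / 2) = x / 2 * (ln x - ln y)"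
  by (simp add: kl_summand_def ln_div)

lemma binary_KL_same [simp]: "binary_KL z z = 0"
  by (simp add: binary_KL_def)

lemma binary_KL_uminus [simp]: "binary_KL (- z) (- w) = binary_KL z w"
  by (simp add: binary_KL_def add.commute)

lemma binary_KL_0_right: "binary_KL z 0 = (1 + z) / 2 * ln (1 + z) + (1 - z) / 2 * ln (1 - z)"
proof -
  have "(1 + z) / 2 / ((1 + 0) / 2) = 1 + z" "(1 - z) / 2 / ((1 - 0) / 2) = 1 - z"
    by simp_all
  then show ?thesis
    unfolding binary_KL_def kl_summand_def by metis
qed

lemma continuous_on_kl_summand:
  assumes "0 < q"
  shows "continuous_on {0..} (\<lambda>r. kl_summand r q)"
proof -
  have "((\<lambda>r. r * ln (r / q)) \<longlongrightarrow> 0) (at_right 0)"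
    using assms by real_asymp
  then have "continuous (at 0 within {0..}) (\<lambda>r. kl_summand r q)"
    by (simp add: continuous_within at_within_Ici_at_right kl_summand_def)
  moreover have "isCont (\<lambda>r. kl_summand r q) r" if "0 < r" for r
    using that assms unfolding kl_summand_def by (auto intro!: continuous_intros)
  ultimately show ?thesis
    by (metis atLeast_iff continuous_at_imp_continuous_at_within continuous_on_eq_continuous_within
        order_le_less)
qed

lemma continuous_on_binary_KL [continuous_intros]:
  assumes "continuous_on S f" "\<And>x. x \<in> S \<Longrightarrow> \<bar>f x\<bar> \<le> 1" "\<bar>w\<bar> < 1"
  shows "continuous_on S (\<lambda>x. binary_KL (f x) w)"
proof -
  have "continuous_on S (\<lambda>x. kl_summand ((1 + s * f x) / 2) ((1 + s * w) / 2))"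
    if "\<bar>s\<bar> = 1" for s
  proof (rule continuous_on_compose2[OF continuous_on_kl_summand])
    show "0 < (1 + s * w) / 2" using that assms(3) by (auto simp: abs_if split: if_splits)
    show "continuous_on S (\<lambda>x. (1 + s * f x) / 2)"
      using assms(1) by (auto intro!: continuous_intros)
    show "(\<lambda>x. (1 + s * f x) / 2) ` S \<subseteq> {0..}"
      using that assms(2) by (force simp: abs_if abs_le_iff split: if_splits)
  qed
  from this[of 1] this[of "-1"] show ?thesis
    unfolding binary_KL_def by (simp add: continuous_on_add)
qed

lemma binary_KL_has_real_derivative:
  assumes "\<bar>z\<bar> < 1" "\<bar>w\<bar> < 1"
  shows "((\<lambda>z. binary_KL z w) has_real_derivative artanh z - artanh w) (at z)"
proof (rule has_field_derivative_transform_within_open)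
  have artanh_eq: "artanh x = (ln (1 + x) - ln (1 - x)) / 2" if "\<bar>x\<bar> < 1" for x :: real
    using that by (auto simp: artanh_def ln_div abs_less_iff)
  let ?f = "\<lambda>t. ((1 + t) * (ln (1 + t) - ln (1 + w)) + (1 - t) * (ln (1 - t) - ln (1 - w))) / 2"
  show "(?f has_real_derivative artanh z - artanh w) (at z)"
  proof -
    have "1 + z \<noteq> 0" "1 - z \<noteq> 0"
      using assms by auto
    then have "(?f has_real_derivative
        ((ln (1 + z) - ln (1 + w) + 1) - (ln (1 - z) - ln (1 - w) + 1)) / 2) (at z)"
      using assms by (auto intro!: derivative_eq_intros simp: abs_less_iff)
    then show ?thesis
      by (rule DERIV_cong) (simp add: artanh_eq assms diff_divide_distrib)
  qed
  show "?f t = binary_KL t w" if "t \<in> {-1<..<1}" for t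
    using that assms by (simp add: binary_KL_def kl_summand_halves)
qed (use assms in auto)

subsection \<open>Strong data processing for binary symmetric channels\<close>

lemma artanh_scaled_diff_mono:
  fixes c u v :: real
  assumes "0 \<le> c" "c \<le> 1" "-1 < u" "u \<le> v" "v < 1"
  shows "c * artanh u - artanh (c * u) \<le> c * artanh v - artanh (c * v)"
proof (rule DERIV_nonneg_imp_nondecreasing[OF assms(4)])
  fix x assume "u \<le> x" "x \<le> v"
  then have x: "\<bar>x\<bar> < 1"
    using assms by auto
  have "(c * x)\<^sup>2 \<le> x\<^sup>2"
    using assms(1,2) by (auto simp: power_mult_distrib intro!: mult_left_le_one_le power_le_one)
  moreover have "x\<^sup>2 < 1"
    using x by (simp add: abs_square_less_1)
  ultimately have "c / (1 - (c * x)\<^sup>2) \<le> c / (1 - x\<^sup>2)"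
    using assms(1) by (intro divide_left_mono mult_pos_pos) auto
  moreover have "\<bar>c * x\<bar> < 1"
    using x assms(1,2) by (simp add: abs_mult) (meson le_less_trans mult_left_le_one_le abs_ge_zero)
  ultimately show
    "\<exists>y. ((\<lambda>x. c * artanh x - artanh (c * x)) has_real_derivative y) (at x) \<and> 0 \<le> y"
    using x by (auto intro!: exI derivative_eq_intros
        artanh_real_has_field_derivative[THEN DERIV_chain2] simp: field_simps)
qed

lemma binary_KL_contraction_interior:
  fixes c z w :: real
  assumes c: "0 < c" "c < 1" and w: "\<bar>w\<bar> < 1" and z: "\<bar>z\<bar> \<le> 1"
  shows "binary_KL (c * z) (c * w) \<le> c\<^sup>2 * binary_KL z w"
proof -
  \<comment> \<open>E vanishes at w, and its derivative c (k x - k w) changes sign there since k is monotone.\<close>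
  define E where "E x = c\<^sup>2 * binary_KL x w - binary_KL (c * x) (c * w)" for x
  define k where "k x = c * artanh x - artanh (c * x)" for x
  have scaled: "\<bar>c * x\<bar> \<le> \<bar>x\<bar>" for x
    using c by (simp add: abs_mult mult_left_le_one_le)
  have cw: "\<bar>c * w\<bar> < 1"
    using scaled[of w] w by linarith
  have "\<bar>c * x\<bar> \<le> 1" if "\<bar>x\<bar> \<le> 1" for x
    using scaled[of x] that by linarith
  then have E_cont: "continuous_on {-1..1} E"
    unfolding E_def using cw w by (intro continuous_intros) auto
  have E_deriv: "(E has_real_derivative c * (k x - k w)) (at x)" if "\<bar>x\<bar> < 1" for x
  proof -
    have "\<bar>c * x\<bar> < 1"
      using scaled[of x] that by linarith
    then show ?thesis
      unfolding E_def k_def using that w cw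
      by (auto intro!: derivative_eq_intros binary_KL_has_real_derivative[THEN DERIV_chain2]
          simp: power2_eq_square algebra_simps)
  qed
  have k_mono: "k x \<le> k y" if "-1 < x" "x \<le> y" "y < 1" for x y
    unfolding k_def using c that by (intro artanh_scaled_diff_mono) auto
  have "E w \<le> E z"
  proof (cases "w \<le> z")
    case True
    show ?thesis
    proof (rule DERIV_nonneg_imp_increasing_open[OF True])
      fix x assume "w < x" "x < z"
      then show "\<exists>y. (E has_real_derivative y) (at x) \<and> 0 \<le> y"
        using E_deriv k_mono[of w x] w z c by (intro exI[of _ "c * (k x - k w)"]) auto
    qed (use w z in \<open>auto intro!: continuous_on_subset[OF E_cont]\<close>)
  next
    case False
    show ?thesis
    proof (rule DERIV_nonpos_imp_decreasing_open[of z w])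
      fix x assume "z < x" "x < w"
      then show "\<exists>y. (E has_real_derivative y) (at x) \<and> y \<le> 0"
        using E_deriv k_mono[of x w] w z c
        by (intro exI[of _ "c * (k x - k w)"]) (auto simp: mult_le_0_iff)
    qed (use False w z in \<open>auto intro!: continuous_on_subset[OF E_cont]\<close>)
  qed
  then show ?thesis
    by (simp add: E_def)
qed

text \<open>The last assumption is absolute continuity; without it binary_KL z w is a junk value
  (ln 0 = 0).\<close>
lemma binary_KL_contraction:
  fixes l z w :: real
  assumes l: "\<bar>l\<bar> \<le> 1" and z: "\<bar>z\<bar> \<le> 1" and w: "\<bar>w\<bar> \<le> 1"
    and "\<bar>w\<bar> = 1 \<Longrightarrow> z = w"
  shows "binary_KL (l * z) (l * w) \<le> l\<^sup>2 * binary_KL z w"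
proof (cases "\<bar>w\<bar> = 1")
  case True
  then show ?thesis
    using assms(4) by simp
next
  case False
  then have w': "\<bar>w\<bar> < 1"
    using w by simp
  consider "l = 0" | "0 < l" "l < 1" | "l = 1" | "-1 < l" "l < 0" | "l = -1"
    using l by linarith
  then show ?thesis
  proof cases
    case 2
    then show ?thesis
      using binary_KL_contraction_interior w' z by blast
  next
    case 4
    then have "binary_KL ((- l) * (- z)) ((- l) * (- w)) \<le> (- l)\<^sup>2 * binary_KL (- z) (- w)"
      using w' z by (intro binary_KL_contraction_interior) auto
    then show ?thesis
      by simp
  qed simp_all
qed

subsection \<open>Ternary BISO channels\<close>

definition bias :: "real \<Rightarrow> real \<Rightarrow> real" where
  "bias a b = (a - b) / (a + b)"

lemma abs_bias_le_1: "0 \<le> a \<Longrightarrow> 0 \<le> b \<Longrightarrow> \<bar>bias a b\<bar> \<le> 1"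
  by (auto simp: bias_def abs_divide divide_le_eq_1)

lemma binary_KL_contraction_bias:
  fixes l t p0 p1 q0 q1 :: real
  assumes l: "\<bar>l\<bar> \<le> 1" and t: "\<bar>t\<bar> \<le> 1"
    and p: "0 \<le> p0" "0 \<le> p1" "0 < p0 + p1" and q: "0 \<le> q0" "0 \<le> q1" "q0 + q1 = 1"
    and abs_cont: "q0 = 0 \<Longrightarrow> p0 = 0" "q1 = 0 \<Longrightarrow> p1 = 0"
  shows "binary_KL (l * (t * bias p0 p1)) (l * (t * (q0 - q1)))
    \<le> l\<^sup>2 * binary_KL (t * bias p0 p1) (t * (q0 - q1))"
proof (rule binary_KL_contraction[OF l])
  have y: "\<bar>q0 - q1\<bar> \<le> 1"
    using q by auto
  show "\<bar>t * bias p0 p1\<bar> \<le> 1"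
    using t abs_bias_le_1[OF p(1,2)] by (simp add: abs_mult mult_le_one)
  show "\<bar>t * (q0 - q1)\<bar> \<le> 1"
    using t y by (simp add: abs_mult mult_le_one)
  show "t * bias p0 p1 = t * (q0 - q1)" if "\<bar>t * (q0 - q1)\<bar> = 1"
  proof -
    have "1 = \<bar>t\<bar> * \<bar>q0 - q1\<bar>"
      using that by (simp add: abs_mult)
    also have "\<dots> \<le> \<bar>q0 - q1\<bar>"
      using t by (simp add: mult_left_le_one_le)
    finally have "q0 = 0 \<or> q1 = 0"
      using y q by (auto simp: abs_if split: if_splits)
    then show ?thesis
      using p q abs_cont by (auto simp: bias_def)
  qed
qed

text \<open>For the channel with W 0 (-1) = a and W 0 1 = b: the divergence between its output under
  the input weights (p0, p1) and p0 + p1 times its output under (q0, q1); the erasure symbol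
  contributes 0.\<close>
definition output_KL :: "real \<Rightarrow> real \<Rightarrow> real \<Rightarrow> real \<Rightarrow> real \<Rightarrow> real \<Rightarrow> real" where
  "output_KL a b p0 p1 q0 q1 =
     kl_summand (p0 * a + p1 * b) ((p0 + p1) * (q0 * a + q1 * b))
   + kl_summand (p0 * b + p1 * a) ((p0 + p1) * (q0 * b + q1 * a))"

lemma output_KL_eq_binary_KL:
  assumes "0 \<le> a" "0 \<le> b" "0 \<le> p0" "0 \<le> p1" "q0 + q1 = 1"
  shows "output_KL a b p0 p1 q0 q1 =
    (p0 + p1) * (a + b) * binary_KL (bias a b * bias p0 p1) (bias a b * (q0 - q1))"
proof (cases "p0 + p1 = 0 \<or> a + b = 0")
  case True
  then have "(p0 = 0 \<and> p1 = 0) \<or> (a = 0 \<and> b = 0)"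
    using assms by linarith
  then show ?thesis
    by (auto simp: output_KL_def)
next
  case False
  define K where "K = (p0 + p1) * (a + b)"
  define X where "X = bias a b * bias p0 p1"
  define Y where "Y = bias a b * (q0 - q1)"
  have nonzero: "p0 + p1 \<noteq> 0" "a + b \<noteq> 0"
    using False by auto
  then have K: "K \<noteq> 0"
    unfolding K_def by simp
  have KX: "K * X = (a - b) * (p0 - p1)"
    using nonzero unfolding K_def X_def bias_def by simp
  have KY: "K * Y = (p0 + p1) * ((a - b) * (q0 - q1))"
    using nonzero unfolding K_def Y_def bias_def by simp
  have q1: "q1 = 1 - q0"
    using assms(5) by simp
  have halves: "K * ((1 + t) / 2) = (K + K * t) / 2" "K * ((1 - t) / 2) = (K - K * t) / 2" for t
    by (simp_all add: algebra_simps)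
  have parts: "p0 * a + p1 * b = K * ((1 + X) / 2)" "p0 * b + p1 * a = K * ((1 - X) / 2)"
    "(p0 + p1) * (q0 * a + q1 * b) = K * ((1 + Y) / 2)"
    "(p0 + p1) * (q0 * b + q1 * a) = K * ((1 - Y) / 2)"
    unfolding halves KX KY unfolding K_def q1 by (simp_all add: field_simps)
  have "output_KL a b p0 p1 q0 q1 = K * binary_KL X Y"
    unfolding output_KL_def parts kl_summand_scale[OF K] binary_KL_def by (simp add: distrib_left)
  then show ?thesis
    by (simp add: K_def X_def Y_def)
qed

lemma output_KL_contraction:
  fixes a b p0 p1 q0 q1 :: real
  assumes "0 \<le> a" "0 \<le> b" "0 \<le> p0" "0 \<le> p1" "p0 + p1 = 1" "0 \<le> q0" "0 \<le> q1" "q0 + q1 = 1"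
    and "q0 = 0 \<Longrightarrow> p0 = 0" "q1 = 0 \<Longrightarrow> p1 = 0"
  shows "output_KL a b p0 p1 q0 q1 \<le> (a + b) * (bias a b)\<^sup>2 * binary_KL (p0 - p1) (q0 - q1)"
proof -
  have bias_p: "bias p0 p1 = p0 - p1"
    using assms(5) by (simp add: bias_def)
  have "binary_KL (bias a b * (1 * bias p0 p1)) (bias a b * (1 * (q0 - q1)))
      \<le> (bias a b)\<^sup>2 * binary_KL (1 * bias p0 p1) (1 * (q0 - q1))"
    using assms by (intro binary_KL_contraction_bias abs_bias_le_1) auto
  then have "(a + b) * binary_KL (bias a b * bias p0 p1) (bias a b * (q0 - q1))
      \<le> (a + b) * ((bias a b)\<^sup>2 * binary_KL (p0 - p1) (q0 - q1))"
    unfolding bias_p using assms(1,2) by (intro mult_left_mono) auto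
  then show ?thesis
    using output_KL_eq_binary_KL[OF assms(1-4,8)] unfolding assms(5) by (simp add: mult.assoc)
qed

lemma output_KL_le_of_abs_bias_le:
  fixes aF bF aG bG p0 p1 q0 q1 :: real
  assumes "0 \<le> aF" "0 \<le> bF" "0 \<le> aG" "0 \<le> bG"
    and same_eta: "(aG + bG) * (bias aG bG)\<^sup>2 = (aF + bF) * (bias aF bF)\<^sup>2"
    and bias_le: "\<bar>bias aG bG\<bar> \<le> \<bar>bias aF bF\<bar>"
    and p: "0 \<le> p0" "0 \<le> p1" and q: "0 \<le> q0" "0 \<le> q1" "q0 + q1 = 1"
    and abs_cont: "q0 = 0 \<Longrightarrow> p0 = 0" "q1 = 0 \<Longrightarrow> p1 = 0"
  shows "output_KL aG bG p0 p1 q0 q1 \<le> output_KL aF bF p0 p1 q0 q1"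
proof -
  define tF where "tF = bias aF bF"
  define tG where "tG = bias aG bG"
  define x where "x = bias p0 p1"
  define y where "y = q0 - q1"
  have F: "output_KL aF bF p0 p1 q0 q1 = (p0 + p1) * (aF + bF) * binary_KL (tF * x) (tF * y)"
    unfolding tF_def x_def y_def using assms by (intro output_KL_eq_binary_KL)
  have G: "output_KL aG bG p0 p1 q0 q1 = (p0 + p1) * (aG + bG) * binary_KL (tG * x) (tG * y)"
    unfolding tG_def x_def y_def using assms by (intro output_KL_eq_binary_KL)
  show ?thesis
  proof (cases "p0 + p1 = 0 \<or> tF = 0")
    case True
    then have "p0 + p1 = 0 \<or> tG = 0"
      using bias_le unfolding tF_def tG_def by auto
    with True show ?thesis
      unfolding F G by auto
  next
    case False
    then have p_pos: "0 < p0 + p1"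
      using p by simp
    define l where "l = tG / tF"
    have tG: "tG = l * tF"
      using False unfolding l_def by simp
    have "(aG + bG) * l\<^sup>2 * tF\<^sup>2 = (aF + bF) * tF\<^sup>2"
      using same_eta unfolding tF_def[symmetric] tG_def[symmetric] tG by (simp add: power_mult_distrib)
    then have mass: "(aG + bG) * l\<^sup>2 = aF + bF"
      using False by simp
    have "\<bar>l\<bar> \<le> 1"
      using bias_le False unfolding l_def tF_def[symmetric] tG_def[symmetric]
      by (simp add: abs_divide divide_le_eq_1)
    then have "binary_KL (l * (tF * x)) (l * (tF * y)) \<le> l\<^sup>2 * binary_KL (tF * x) (tF * y)"
      unfolding x_def y_def tF_def using assms p_pos
      by (intro binary_KL_contraction_bias abs_bias_le_1) auto
    then have "(p0 + p1) * (aG + bG) * binary_KL (l * (tF * x)) (l * (tF * y))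
        \<le> (p0 + p1) * (aG + bG) * (l\<^sup>2 * binary_KL (tF * x) (tF * y))"
      using p_pos assms(3,4) by (intro mult_left_mono) auto
    also have "\<dots> = (p0 + p1) * ((aG + bG) * l\<^sup>2) * binary_KL (tF * x) (tF * y)"
      by (simp only: mult.assoc)
    finally show ?thesis
      unfolding F G tG mass by (simp only: mult.assoc)
  qed
qed

lemma KL_eq_sum_kl_summand:
  assumes "finite A" "\<forall>a\<in>A. 0 \<le> p a" "\<forall>a\<in>A. q a = 0 \<longrightarrow> p a = 0"
  shows "KL A p q = ereal (\<Sum>a\<in>A. kl_summand (p a) (q a))"
proof -
  have "(\<Sum>a\<in>{a\<in>A. 0 < p a}. p a * ln (p a / q a)) = (\<Sum>a\<in>A. kl_summand (p a) (q a))"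
    unfolding kl_summand_def using assms(1,2) by (intro sum.mono_neutral_left) force+
  then show ?thesis
    using assms(3) by (auto simp: KL_def)
qed

lemma KL_finite_imp_abs_cont:
  assumes "KL A p q < \<infinity>" "a \<in> A" "q a = 0" "0 \<le> p a"
  shows "p a = 0"
  using assms by (force simp: KL_def split: if_splits)

lemma binary_KL_diff:
  assumes "p0 + p1 = 1" "q0 + q1 = 1"
  shows "binary_KL (p0 - p1) (q0 - q1) = kl_summand p0 q0 + kl_summand p1 q1"
proof -
  have "(1 + (p0 - p1)) / 2 = p0" "(1 - (p0 - p1)) / 2 = p1"
    "(1 + (q0 - q1)) / 2 = q0" "(1 - (q0 - q1)) / 2 = q1"
    using assms by auto
  then show ?thesis
    unfolding binary_KL_def by (simp only:)
qed

lemma KL_01: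
  fixes p q :: "nat \<Rightarrow> real"
  assumes "pmf_on {0, 1} p" "pmf_on {0, 1} q" "\<forall>x\<in>{0, 1}. q x = 0 \<longrightarrow> p x = 0"
  shows "KL {0, 1} p q = ereal (binary_KL (p 0 - p 1) (q 0 - q 1))"
proof -
  have "p 0 + p 1 = 1" "q 0 + q 1 = 1"
    using assms(1,2) by (simp_all add: pmf_on_def)
  moreover have "KL {0, 1} p q = ereal (\<Sum>x\<in>{0, 1}. kl_summand (p x) (q x))"
    using assms by (intro KL_eq_sum_kl_summand) (auto simp: pmf_on_def)
  ultimately show ?thesis
    by (simp add: binary_KL_diff)
qed

lemma out_dist_abs_cont:
  assumes "finite X" "\<forall>x\<in>X. 0 \<le> q x \<and> 0 \<le> W x y" "\<forall>x\<in>X. q x = 0 \<longrightarrow> p x = 0"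
    and "out_dist X W q y = 0"
  shows "out_dist X W p y = 0"
proof -
  have "\<forall>x\<in>X. q x * W x y = 0"
    using assms(4)
    by (subst sum_nonneg_eq_0_iff[symmetric]) (use assms(1,2) in \<open>auto simp: out_dist_def\<close>)
  then have "\<forall>x\<in>X. p x * W x y = 0"
    using assms(3) by auto
  then show ?thesis
    unfolding out_dist_def by (rule sum.neutral)
qed

lemma out_dist_nonneg: "\<forall>x\<in>X. 0 \<le> p x \<and> 0 \<le> W x y \<Longrightarrow> 0 \<le> out_dist X W p y"
  by (simp add: out_dist_def sum_nonneg)

lemma biso1_nonneg: "biso1 W \<Longrightarrow> x \<in> {0, 1} \<Longrightarrow> y \<in> {-1, 0, 1} \<Longrightarrow> 0 \<le> W x y"
  unfolding biso1_def channel_def pmf_on_def by blast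

lemma biso1_entries:
  assumes "biso1 W"
  shows "0 \<le> W 0 (-1)" "0 \<le> W 0 0" "0 \<le> W 0 1" "W 0 (-1) + W 0 0 + W 0 1 = 1"
    and "W 1 (-1) = W 0 1" "W 1 0 = W 0 0" "W 1 1 = W 0 (-1)"
  using assms by (auto simp: biso1_def channel_def pmf_on_def)

lemma out_dist_biso1:
  assumes "biso1 W"
  shows "out_dist {0, 1} W r (-1) = r 0 * W 0 (-1) + r 1 * W 0 1"
    and "out_dist {0, 1} W r 0 = (r 0 + r 1) * W 0 0"
    and "out_dist {0, 1} W r 1 = r 0 * W 0 1 + r 1 * W 0 (-1)"
  using biso1_entries[OF assms] by (simp_all add: out_dist_def algebra_simps)

lemma sum_kl_summand_out_dist_biso1:
  assumes "biso1 W" "s 0 + s 1 = 1"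
  shows "(\<Sum>y\<in>{-1, 0, 1}.
      kl_summand (out_dist {0, 1} W r y) ((r 0 + r 1) * out_dist {0, 1} W s y))
    = output_KL (W 0 (-1)) (W 0 1) (r 0) (r 1) (s 0) (s 1)"
proof -
  let ?f = "\<lambda>y. kl_summand (out_dist {0, 1} W r y) ((r 0 + r 1) * out_dist {0, 1} W s y)"
  have "(\<Sum>y\<in>{-1, 0, 1}. ?f y) = ?f (-1) + ?f 0 + ?f 1"
    by simp
  also have "\<dots> = output_KL (W 0 (-1)) (W 0 1) (r 0) (r 1) (s 0) (s 1)"
    unfolding out_dist_biso1[OF assms(1)] assms(2) by (simp add: output_KL_def)
  finally show ?thesis .
qed

lemma KL_out_dist_biso1:
  assumes W: "biso1 W" and p: "pmf_on {0, 1} p" and q: "pmf_on {0, 1} q"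
    and abs_cont: "\<forall>x\<in>{0, 1}. q x = 0 \<longrightarrow> p x = 0"
  shows "KL {-1, 0, 1} (out_dist {0, 1} W p) (out_dist {0, 1} W q)
    = ereal (output_KL (W 0 (-1)) (W 0 1) (p 0) (p 1) (q 0) (q 1))"
proof -
  have W_nonneg: "\<forall>x\<in>{0, 1}. 0 \<le> W x y" if "y \<in> {-1, 0, 1}" for y
    using that biso1_nonneg[OF W] by auto
  have p_nonneg: "\<forall>x\<in>{0, 1}. 0 \<le> p x" and q_nonneg: "\<forall>x\<in>{0, 1}. 0 \<le> q x"
    using p q by (simp_all add: pmf_on_def)
  have "KL {-1, 0, 1} (out_dist {0, 1} W p) (out_dist {0, 1} W q)
      = ereal (\<Sum>y\<in>{-1, 0, 1}. kl_summand (out_dist {0, 1} W p y) (out_dist {0, 1} W q y))"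
  proof (rule KL_eq_sum_kl_summand)
    show "\<forall>y\<in>{-1, 0, 1}. 0 \<le> out_dist {0, 1} W p y"
      using W_nonneg p_nonneg by (auto intro!: out_dist_nonneg)
    show "\<forall>y\<in>{-1, 0, 1}. out_dist {0, 1} W q y = 0 \<longrightarrow> out_dist {0, 1} W p y = 0"
    proof (intro ballI impI)
      fix y assume y: "y \<in> {-1, 0, 1}" and out_q: "out_dist {0, 1} W q y = 0"
      show "out_dist {0, 1} W p y = 0"
        by (rule out_dist_abs_cont[OF _ _ abs_cont out_q]) (use W_nonneg[OF y] q_nonneg in auto)
    qed
  qed simp
  also have "\<dots> = ereal (output_KL (W 0 (-1)) (W 0 1) (p 0) (p 1) (q 0) (q 1))"
  proof -
    have "p 0 + p 1 = 1" "q 0 + q 1 = 1"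
      using p q by (simp_all add: pmf_on_def)
    then show ?thesis
      using sum_kl_summand_out_dist_biso1[OF W, of q p] by simp
  qed
  finally show ?thesis .
qed

lemma pmf_on_times_01:
  fixes P :: "'u \<Rightarrow> nat \<Rightarrow> real"
  assumes "pmf_on (U \<times> {0, 1}) (\<lambda>(u, x). P u x)"
  shows "\<forall>u\<in>U. 0 \<le> P u 0 \<and> 0 \<le> P u 1" "(\<Sum>u\<in>U. P u 0) + (\<Sum>u\<in>U. P u 1) = 1"
proof -
  show "\<forall>u\<in>U. 0 \<le> P u 0 \<and> 0 \<le> P u 1"
    using assms by (auto simp: pmf_on_def)
  have "(\<Sum>(u, x)\<in>U \<times> {0, 1}. P u x) = (\<Sum>u\<in>U. \<Sum>x\<in>{0, 1}. P u x)"
    by (rule sum.cartesian_product[symmetric])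
  also have "\<dots> = (\<Sum>u\<in>U. P u 0 + P u 1)"
    by simp
  finally show "(\<Sum>u\<in>U. P u 0) + (\<Sum>u\<in>U. P u 1) = 1"
    using assms by (simp add: pmf_on_def sum.distrib)
qed

lemma out_dist_apply: "out_dist X W p y = (\<Sum>x\<in>X. p x * W x y)"
  by (simp add: out_dist_def)

lemma mutual_info_biso1:
  assumes W: "biso1 W" and U: "finite U" and P: "pmf_on (U \<times> {0, 1}) (\<lambda>(u, x). PUX u x)"
  shows "mutual_info U {0, 1} {-1, 0, 1} W PUX =
    (\<Sum>u\<in>U. output_KL (W 0 (-1)) (W 0 1) (PUX u 0) (PUX u 1)
      (\<Sum>v\<in>U. PUX v 0) (\<Sum>v\<in>U. PUX v 1))"
proof -
  define PX where "PX x = (\<Sum>v\<in>U. PUX v x)" for x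
  define PUY where "PUY u y = out_dist {0, 1} W (PUX u) y" for u y
  define PUPY where "PUPY u y = (PUX u 0 + PUX u 1) * out_dist {0, 1} W PX y" for u y
  note P_nonneg = pmf_on_times_01(1)[OF P] and PX_sum = pmf_on_times_01(2)[OF P, folded PX_def]
  have PY: "(\<Sum>u\<in>U. out_dist {0, 1} W (PUX u) y) = out_dist {0, 1} W PX y" for y
    unfolding out_dist_def PX_def by (simp add: sum.distrib sum_distrib_right)
  have "mutual_info U {0, 1} {-1, 0, 1} W PUX =
      (\<Sum>(u, y)\<in>{(u, y) \<in> U \<times> {-1, 0, 1}. 0 < PUY u y}. PUY u y * ln (PUY u y / PUPY u y))"
    unfolding mutual_info_def Let_def out_dist_apply[symmetric] PY PUY_def PUPY_def by simp
  also have "\<dots> = (\<Sum>(u, y)\<in>U \<times> {-1, 0, 1}. kl_summand (PUY u y) (PUPY u y))"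
  proof -
    have "\<forall>(u, y)\<in>U \<times> {-1, 0, 1}. 0 \<le> PUY u y"
      using P_nonneg biso1_nonneg[OF W] unfolding PUY_def by (auto intro!: out_dist_nonneg)
    then show ?thesis
      using U by (intro sum.mono_neutral_cong_left) (auto simp: kl_summand_def)
  qed
  also have "\<dots> = (\<Sum>u\<in>U. output_KL (W 0 (-1)) (W 0 1) (PUX u 0) (PUX u 1) (PX 0) (PX 1))"
    unfolding sum.cartesian_product[symmetric] PUY_def PUPY_def
    using sum_kl_summand_out_dist_biso1[OF W PX_sum] by simp
  finally show ?thesis
    unfolding PX_def .
qed

lemma less_noisy_biso1I:
  assumes F: "biso1 F" and G: "biso1 G"
    and same_eta: "(G 0 (-1) + G 0 1) * (bias (G 0 (-1)) (G 0 1))\<^sup>2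
      = (F 0 (-1) + F 0 1) * (bias (F 0 (-1)) (F 0 1))\<^sup>2"
    and bias_le: "\<bar>bias (G 0 (-1)) (G 0 1)\<bar> \<le> \<bar>bias (F 0 (-1)) (F 0 1)\<bar>"
  shows "less_noisy {0, 1} {-1, 0, 1} F {-1, 0, 1} G"
  unfolding less_noisy_def
proof (intro allI impI, elim conjE)
  fix U :: "nat set" and PUX :: "nat \<Rightarrow> nat \<Rightarrow> real"
  assume U: "finite U" and P: "pmf_on (U \<times> {0, 1}) (\<lambda>(u, x). PUX u x)"
  note P_nonneg = pmf_on_times_01(1)[OF P] and PX_sum = pmf_on_times_01(2)[OF P]
  show "mutual_info U {0, 1} {-1, 0, 1} G PUX \<le> mutual_info U {0, 1} {-1, 0, 1} F PUX"
    unfolding mutual_info_biso1[OF G U P] mutual_info_biso1[OF F U P]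
  proof (rule sum_mono)
    fix u assume u: "u \<in> U"
    have PUX_le: "PUX u x \<le> (\<Sum>v\<in>U. PUX v x)" and PX_nonneg: "0 \<le> (\<Sum>v\<in>U. PUX v x)"
      if "x \<in> {0, 1}" for x
      using P_nonneg u U that by (auto intro!: member_le_sum sum_nonneg)
    have abs_cont: "(\<Sum>v\<in>U. PUX v x) = 0 \<Longrightarrow> PUX u x = 0" if "x \<in> {0, 1}" for x
      using PUX_le[OF that] P_nonneg u that by force
    show "output_KL (G 0 (-1)) (G 0 1) (PUX u 0) (PUX u 1) (\<Sum>v\<in>U. PUX v 0) (\<Sum>v\<in>U. PUX v 1)
      \<le> output_KL (F 0 (-1)) (F 0 1) (PUX u 0) (PUX u 1)
          (\<Sum>v\<in>U. PUX v 0) (\<Sum>v\<in>U. PUX v 1)"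
      by (rule output_KL_le_of_abs_bias_le[OF _ _ _ _ same_eta bias_le])
        (use biso1_entries[OF F] biso1_entries[OF G] P_nonneg u PX_nonneg PX_sum abs_cont in auto)
  qed
qed

subsection \<open>The KL contraction coefficient\<close>

lemma eventually_binary_KL_pos:
  "eventually (\<lambda>s. 0 < s \<and> s < 1 \<and> 0 < binary_KL s 0) (at_right 0)"
  unfolding binary_KL_0_right by (intro eventually_conj; real_asymp)

lemma binary_KL_ratio_tendsto:
  "((\<lambda>s. binary_KL (c * s) 0 / binary_KL s 0) \<longlongrightarrow> c\<^sup>2) (at_right 0)"
proof -
  consider "c = 0" | "0 < c" | "c < 0"
    by linarith
  then show ?thesis
    unfolding binary_KL_0_right power2_eq_square by cases (simp, real_asymp, real_asymp)
qed

lemma eta_KL_biso1_le: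
  assumes W: "biso1 W"
  shows "eta_KL {0, 1} {-1, 0, 1} W \<le> ereal ((W 0 (-1) + W 0 1) * (bias (W 0 (-1)) (W 0 1))\<^sup>2)"
  unfolding eta_KL_def
proof (rule SUP_least)
  fix pq :: "(nat \<Rightarrow> real) \<times> (nat \<Rightarrow> real)"
  assume "pq \<in> {(p, q). pmf_on {0, 1} p \<and> pmf_on {0, 1} q
      \<and> 0 < KL {0, 1} p q \<and> KL {0, 1} p q < \<infinity>}"
  then obtain p q where pq: "pq = (p, q)" and p: "pmf_on {0, 1} p" and q: "pmf_on {0, 1} q"
    and pos: "0 < KL {0, 1} p q" and fin: "KL {0, 1} p q < \<infinity>"
    by auto
  have abs_cont: "\<forall>x\<in>{0, 1}. q x = 0 \<longrightarrow> p x = 0"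
    using KL_finite_imp_abs_cont[OF fin] p by (auto simp: pmf_on_def)
  define D where "D = binary_KL (p 0 - p 1) (q 0 - q 1)"
  have KL_in: "KL {0, 1} p q = ereal D"
    unfolding D_def by (rule KL_01[OF p q abs_cont])
  then have "0 < D"
    using pos by simp
  have "output_KL (W 0 (-1)) (W 0 1) (p 0) (p 1) (q 0) (q 1)
      \<le> (W 0 (-1) + W 0 1) * (bias (W 0 (-1)) (W 0 1))\<^sup>2 * D"
    unfolding D_def using biso1_entries[OF W] p q abs_cont
    by (intro output_KL_contraction) (auto simp: pmf_on_def)
  then show "KL {-1, 0, 1} (out_dist {0, 1} W (fst pq)) (out_dist {0, 1} W (snd pq))
      / KL {0, 1} (fst pq) (snd pq) \<le> ereal ((W 0 (-1) + W 0 1) * (bias (W 0 (-1)) (W 0 1))\<^sup>2)"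
    using \<open>0 < D\<close> unfolding pq fst_conv snd_conv KL_in KL_out_dist_biso1[OF W p q abs_cont]
    by (simp add: pos_divide_le_eq)
qed

lemma eta_KL_biso1_ge:
  assumes W: "biso1 W"
  shows "ereal ((W 0 (-1) + W 0 1) * (bias (W 0 (-1)) (W 0 1))\<^sup>2) \<le> eta_KL {0, 1} {-1, 0, 1} W"
proof -
  define a b where "a = W 0 (-1)" and "b = W 0 1"
  have ab: "0 \<le> a" "0 \<le> b"
    using biso1_entries[OF W] by (simp_all add: a_def b_def)
  define u :: "nat \<Rightarrow> real" where "u x = 1 / 2" for x
  define ps :: "real \<Rightarrow> nat \<Rightarrow> real"
    where "ps s x = (if x = 0 then (1 + s) / 2 else (1 - s) / 2)" for s x
  define ratio where "ratio s = (a + b) * (binary_KL (bias a b * s) 0 / binary_KL s 0)" for s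
  \<comment> \<open>The supremum is approached by the inputs ((1 + s) / 2, (1 - s) / 2) against the uniform
    one as s \<rightarrow> 0.\<close>
  have witness: "ereal (ratio s) \<le> eta_KL {0, 1} {-1, 0, 1} W"
    if s: "0 < s" "s < 1" "0 < binary_KL s 0" for s
  proof -
    have p: "pmf_on {0, 1} (ps s)" and q: "pmf_on {0, 1} u"
      and abs_cont: "\<forall>x\<in>{0, 1}. u x = 0 \<longrightarrow> ps s x = 0" and ps_nonneg: "0 \<le> ps s 0" "0 \<le> ps s 1"
      using s by (auto simp: pmf_on_def ps_def u_def add_divide_distrib[symmetric])
    have ps_u: "ps s 0 - ps s 1 = s" "ps s 0 + ps s 1 = 1" "bias (ps s 0) (ps s 1) = s"
      "u 0 - u 1 = 0" "u 0 + u 1 = 1"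
      by (simp_all add: ps_def u_def bias_def field_simps)
    have KL_in: "KL {0, 1} (ps s) u = ereal (binary_KL s 0)"
      using KL_01[OF p q abs_cont] unfolding ps_u .
    have "KL {-1, 0, 1} (out_dist {0, 1} W (ps s)) (out_dist {0, 1} W u)
        = ereal ((a + b) * binary_KL (bias a b * s) 0)"
      unfolding KL_out_dist_biso1[OF W p q abs_cont, folded a_def b_def]
        output_KL_eq_binary_KL[OF ab ps_nonneg ps_u(5)] ps_u by simp
    then show ?thesis
      unfolding eta_KL_def ratio_def using p q KL_in s
      by (intro SUP_upper2[of "(ps s, u)"]) auto
  qed
  have "((\<lambda>s. ereal (ratio s)) \<longlongrightarrow> ereal ((a + b) * (bias a b)\<^sup>2)) (at_right 0)"
    unfolding ratio_def by (intro tendsto_intros binary_KL_ratio_tendsto)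
  moreover have "eventually (\<lambda>s. ereal (ratio s) \<le> eta_KL {0, 1} {-1, 0, 1} W) (at_right 0)"
    using eventually_binary_KL_pos by eventually_elim (use witness in auto)
  ultimately show ?thesis
    unfolding a_def b_def by (intro tendsto_le[OF trivial_limit_at_right_real tendsto_const])
qed

lemma eta_KL_biso1:
  "biso1 W \<Longrightarrow>
    eta_KL {0, 1} {-1, 0, 1} W = ereal ((W 0 (-1) + W 0 1) * (bias (W 0 (-1)) (W 0 1))\<^sup>2)"
  by (intro antisym eta_KL_biso1_le eta_KL_biso1_ge)

theorem mainTheorem3:
  fixes F G :: "nat \<Rightarrow> int \<Rightarrow> real"
  assumes "biso1 F" and "biso1 G"
    and "eta_KL {0, 1} {-1, 0, 1} F = eta_KL {0, 1} {-1, 0, 1} G"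
  shows "less_noisy {0, 1} {-1, 0, 1} F {-1, 0, 1} G \<or> less_noisy {0, 1} {-1, 0, 1} G {-1, 0, 1} F"
proof -
  have same_eta: "(G 0 (-1) + G 0 1) * (bias (G 0 (-1)) (G 0 1))\<^sup>2
      = (F 0 (-1) + F 0 1) * (bias (F 0 (-1)) (F 0 1))\<^sup>2"
    using assms(3) unfolding eta_KL_biso1[OF assms(1)] eta_KL_biso1[OF assms(2)] by simp
  consider "\<bar>bias (G 0 (-1)) (G 0 1)\<bar> \<le> \<bar>bias (F 0 (-1)) (F 0 1)\<bar>"
    | "\<bar>bias (F 0 (-1)) (F 0 1)\<bar> \<le> \<bar>bias (G 0 (-1)) (G 0 1)\<bar>"
    by linarith
  then show ?thesis
    using less_noisy_biso1I[OF assms(1,2) same_eta] less_noisy_biso1I[OF assms(2,1) same_eta[symmetric]]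
    by cases blast+
qed

end
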